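(* Let $A$ be a $DP$ algebra over $R$. Then $A$ admits a structure of abelian group object in $\mathbf{DPAlg}_R$ if and only if the multiplication of $A$ is identically zero ($ab=0$ for all $a,b\in A$), i.e. if and only if $A$ is an abelian group object in the category of (non-unital commutative) $R$-algebras; in that case the group operation is necessarily the addition of $A$. Moreover, if the multiplication of $A$ is zero then: (i) $\gamma_n=0$ for every $n\ge 2$ that is not a power of a prime; (ii) for every prime $p$, $\gamma_p$ is additive, $p\,\gamma_p(a)=0$ and $\gamma_p(ra)=r^p\gamma_p(a)$ for all $a\in A$, $r\in R$; (iii) for every prime $p$ and $e\ge1$, $\gamma_{p^e}=\gamma_p\circ\gamma_p\circ\cdots\circ\gamma_p$ ($e$-fold composite), and $p\,\gamma_{p^e}=0$.
   Context: Fix a commutative unital ring $R$; unadorned $\otimes$ means $\otimes_R$. An "algebra" means a commutative, not necessarily unital, $R$-algebra. A $DP$ (divided power) algebra is an algebra $A$ together with maps $\gamma_n:A\to A$ ($n\ge1$) such that for all $a,b\in A$, $r\in R$, $m,n\ge1$: $\gamma_1(a)=a$; $\gamma_n(a+b)=\gamma_n(a)+\sum_{i+j=n,\,i,j\ge1}\gamma_i(a)\gamma_j(b)+\gamma_n(b)$; $\gamma_n(ab)=a^n\gamma_n(b)$; $\gamma_n(rb)=r^n\gamma_n(b)$; $\gamma_m(a)\gamma_n(a)=\frac{(m+n)!}{m!\,n!}\gamma_{m+n}(a)$; $\gamma_m(\gamma_n(a))=\frac{(mn)!}{m!(n!)^m}\gamma_{mn}(a)$. Morphisms of $DP$ algebras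 are algebra maps commuting with all $\gamma_n$; this category is $\mathbf{DPAlg}_R$. Products in $\mathbf{DPAlg}_R$ are the products of underlying algebras with componentwise operations, and the terminal object is $0$. An abelian group object is an object with morphisms (multiplication, unit from the terminal object, inverse) satisfying the abelian group axioms. *)

theory Defs
  imports "HOL-Computational_Algebra.Primes"
begin

text \<open>A (commutative, not necessarily unital) algebra over the commutative ring of
  scalars of type 'r, with underlying set the whole type 'a, together with a family
  of operations gam n (only n >= 1 is meaningful; gam 0 is ignored everywhere).\<close>

record ('r, 'a) dp_ops =
  add  :: "'a \<Rightarrow> 'a \<Rightarrow> 'a"
  zer  :: 'a
  neg  :: "'a \<Rightarrow> 'a"
  mul  :: "'a \<Rightarrow> 'a \<Rightarrow> 'a"
  smul :: "'r \<Rightarrow> 'a \<Rightarrow> 'a"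
  gam  :: "nat \<Rightarrow> 'a \<Rightarrow> 'a"

definition nsmul :: "('r, 'a, 'z) dp_ops_scheme \<Rightarrow> nat \<Rightarrow> 'a \<Rightarrow> 'a" where
  "nsmul A k a = (add A a ^^ k) (zer A)"

definition lsum :: "('r, 'a, 'z) dp_ops_scheme \<Rightarrow> 'a list \<Rightarrow> 'a" where
  "lsum A xs = foldr (add A) xs (zer A)"

definition is_algebra :: "('r::comm_ring_1, 'a) dp_ops \<Rightarrow> bool" where
  "is_algebra A \<longleftrightarrow>
     (\<forall>a b c. add A (add A a b) c = add A a (add A b c)) \<and>
     (\<forall>a b. add A a b = add A b a) \<and>
     (\<forall>a. add A (zer A) a = a) \<and>
     (\<forall>a. add A a (neg A a) = zer A) \<and>
     (\<forall>a b c. mul A (mul A a b) c = mul A a (mul A b c)) \<and>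
     (\<forall>a b. mul A a b = mul A b a) \<and>
     (\<forall>a b c. mul A a (add A b c) = add A (mul A a b) (mul A a c)) \<and>
     (\<forall>r s a. smul A (r + s) a = add A (smul A r a) (smul A s a)) \<and>
     (\<forall>r a b. smul A r (add A a b) = add A (smul A r a) (smul A r b)) \<and>
     (\<forall>r s a. smul A (r * s) a = smul A r (smul A s a)) \<and>
     (\<forall>a. smul A 1 a = a) \<and>
     (\<forall>r a b. smul A r (mul A a b) = mul A (smul A r a) b)"

definition is_dp_algebra :: "('r::comm_ring_1, 'a) dp_ops \<Rightarrow> bool" where
  "is_dp_algebra A \<longleftrightarrow> is_algebra A \<and>
     (\<forall>a. gam A 1 a = a) \<and>
     (\<forall>n\<ge>1. \<forall>a b. gam A n (add A a b) =
        add A (gam A n a)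
          (add A (lsum A (map (\<lambda>i. mul A (gam A i a) (gam A (n - i) b)) [1..<n]))
                 (gam A n b))) \<and>
     (\<forall>n\<ge>1. \<forall>a b. gam A n (mul A a b) = mul A ((mul A a ^^ (n - 1)) a) (gam A n b)) \<and>
     (\<forall>n\<ge>1. \<forall>r b. gam A n (smul A r b) = smul A (r ^ n) (gam A n b)) \<and>
     (\<forall>m\<ge>1. \<forall>n\<ge>1. \<forall>a. mul A (gam A m a) (gam A n a) =
        nsmul A (fact (m + n) div (fact m * fact n)) (gam A (m + n) a)) \<and>
     (\<forall>m\<ge>1. \<forall>n\<ge>1. \<forall>a. gam A m (gam A n a) =
        nsmul A (fact (m * n) div (fact m * fact n ^ m)) (gam A (m * n) a))"

definition alg_hom :: "('r, 'a) dp_ops \<Rightarrow> ('r, 'b) dp_ops \<Rightarrow> ('a \<Rightarrow> 'b) \<Rightarrow> bool" where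
  "alg_hom A B f \<longleftrightarrow>
     (\<forall>x y. f (add A x y) = add B (f x) (f y)) \<and>
     (\<forall>x y. f (mul A x y) = mul B (f x) (f y)) \<and>
     (\<forall>r x. f (smul A r x) = smul B r (f x))"

definition dp_hom :: "('r, 'a) dp_ops \<Rightarrow> ('r, 'b) dp_ops \<Rightarrow> ('a \<Rightarrow> 'b) \<Rightarrow> bool" where
  "dp_hom A B f \<longleftrightarrow> alg_hom A B f \<and> (\<forall>n\<ge>1. \<forall>x. f (gam A n x) = gam B n (f x))"

definition prod_alg :: "('r, 'a) dp_ops \<Rightarrow> ('r, 'b) dp_ops \<Rightarrow> ('r, 'a \<times> 'b) dp_ops" where
  "prod_alg A B =
     \<lparr> add = (\<lambda>(a, b) (a', b'). (add A a a', add B b b')),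
       zer = (zer A, zer B),
       neg = (\<lambda>(a, b). (neg A a, neg B b)),
       mul = (\<lambda>(a, b) (a', b'). (mul A a a', mul B b b')),
       smul = (\<lambda>r (a, b). (smul A r a, smul B r b)),
       gam = (\<lambda>n (a, b). (gam A n a, gam B n b)) \<rparr>"

definition term_alg :: "('r, unit) dp_ops" where
  "term_alg = \<lparr> add = (\<lambda>_ _. ()), zer = (), neg = (\<lambda>_. ()), mul = (\<lambda>_ _. ()),
                smul = (\<lambda>_ _. ()), gam = (\<lambda>_ _. ()) \<rparr>"

text \<open>Abelian group object structure (m, e, i) on A with respect to a given notion of
  morphism hom (either alg_hom or dp_hom); the axioms are the morphism equations
  evaluated pointwise.\<close>
definition ab_group_obj ::
  "(('r, 'a \<times> 'a) dp_ops \<Rightarrow> ('r, 'a) dp_ops \<Rightarrow> ('a \<times> 'a \<Rightarrow> 'a) \<Rightarrow> bool) \<Rightarrow>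
   (('r, unit) dp_ops \<Rightarrow> ('r, 'a) dp_ops \<Rightarrow> (unit \<Rightarrow> 'a) \<Rightarrow> bool) \<Rightarrow>
   (('r, 'a) dp_ops \<Rightarrow> ('r, 'a) dp_ops \<Rightarrow> ('a \<Rightarrow> 'a) \<Rightarrow> bool) \<Rightarrow>
   ('r, 'a) dp_ops \<Rightarrow> ('a \<times> 'a \<Rightarrow> 'a) \<Rightarrow> (unit \<Rightarrow> 'a) \<Rightarrow> ('a \<Rightarrow> 'a) \<Rightarrow> bool" where
  "ab_group_obj hom2 hom0 hom1 A m e i \<longleftrightarrow>
     hom2 (prod_alg A A) A m \<and> hom0 term_alg A e \<and> hom1 A A i \<and>
     (\<forall>a b c. m (m (a, b), c) = m (a, m (b, c))) \<and>
     (\<forall>a. m (e (), a) = a \<and> m (a, e ()) = a) \<and>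
     (\<forall>a. m (a, i a) = e () \<and> m (i a, a) = e ()) \<and>
     (\<forall>a b. m (a, b) = m (b, a))"

abbreviation ab_group_obj_DP where
  "ab_group_obj_DP \<equiv> ab_group_obj dp_hom dp_hom dp_hom"

abbreviation ab_group_obj_Alg where
  "ab_group_obj_Alg \<equiv> ab_group_obj alg_hom alg_hom alg_hom"

end

theory Submission
  imports Defs "HOL-Number_Theory.Cong"
begin

(* For an abelian group object (m, e, i) in algebras, e is the zero and additivity of m gives
   m (a, b) = m (a, 0) + m (0, b) = a + b (Eckmann-Hilton); multiplicativity of m then gives
   a b = m ((a, 0) (0, b)) = m (0, 0) = 0.  Conversely, if the multiplication vanishes, the cross
   terms in gamma_n (a + b) vanish, so addition is a morphism of DP algebras.

   If the multiplication vanishes, gamma_i (a) gamma_(n-i) (a) = (n choose i) gamma_n (a) shows that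
   gamma_n (a) is killed by every (n choose i) with 0 < i < n.  Modulo p, Vandermonde's identity
   gives (x + p^e choose k) = (x choose k) + (x choose k - p^e); hence (m p^e choose p^e) = m, so
   p does not divide (n choose p^(v_p n)) and for n not a prime power these binomials have gcd 1.
   For n = p^(e+1), gamma_p (gamma_(p^e) a) = c gamma_n (a) with c = (p^(e+1))! / (p! (p^e)!^p)
   congruent to 1 mod p: thus p c and p^(e+1) both kill gamma_n (a), hence so does p, and
   gamma_n = gamma_p o gamma_(p^e). *)

lemma prime_dvd_binomial_prime_power:
  assumes "prime p" "0 < i" "i < p ^ e"
  shows "p dvd (p ^ e choose i)"
proof (rule ccontr)
  assume "\<not> p dvd (p ^ e choose i)"
  then have "coprime (p ^ e) (p ^ e choose i)"
    using assms(1) by (simp add: prime_imp_coprime)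
  moreover have "p ^ e dvd (p ^ e choose i) * i"
    using times_binomial_minus1_eq[OF assms(2), of "p ^ e"] by (simp add: mult.commute)
  ultimately have "p ^ e dvd i"
    by (simp add: coprime_dvd_mult_right_iff)
  with assms(2,3) show False
    by (simp add: nat_dvd_not_less)
qed

lemma binomial_add_prime_power_cong:
  assumes p: "prime p"
  shows "[(x + p ^ e) choose k =
    (x choose k) + (if p ^ e \<le> k then x choose (k - p ^ e) else 0)] (mod p)"
proof -
  define q where "q = p ^ e"
  have "0 < q"
    using p by (simp add: q_def prime_gt_0_nat)
  define f where "f i = (q choose i) * (x choose (k - i))" for i
  have "[f i = (if i = 0 then f i else 0) + (if i = q then f i else 0)] (mod p)" for i
  proof -
    consider "i = 0" | "i = q" | "0 < i" "i < q" | "q < i"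
      by linarith
    then show ?thesis
    proof cases
      case 3
      then have "p dvd f i"
        using prime_dvd_binomial_prime_power[OF p] by (simp add: f_def q_def)
      with 3 show ?thesis
        by (simp add: cong_0_iff)
    qed (use \<open>0 < q\<close> in \<open>simp_all add: f_def binomial_eq_0\<close>)
  qed
  then have "[(\<Sum>i\<le>k. f i) =
      (\<Sum>i\<le>k. (if i = 0 then f i else 0) + (if i = q then f i else 0))] (mod p)"
    by (rule cong_sum)
  moreover have "(\<Sum>i\<le>k. f i) = (x + q) choose k"
    using vandermonde[of q x k] by (simp add: f_def add.commute)
  moreover have "(\<Sum>i\<le>k. (if i = 0 then f i else 0) + (if i = q then f i else 0))
      = (x choose k) + (if q \<le> k then x choose (k - q) else 0)"
    using \<open>0 < q\<close> by (simp add: sum.distrib f_def)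
  ultimately show ?thesis
    unfolding q_def[symmetric] by simp
qed

lemma binomial_mult_prime_power_cong:
  assumes "prime p"
  shows "[(j * p ^ e) choose (p ^ e) = j] (mod p)"
proof (induction j)
  case 0
  show ?case
    using assms by (simp add: prime_gt_0_nat binomial_eq_0)
next
  case (Suc j)
  have "[(j * p ^ e + p ^ e) choose (p ^ e) = (j * p ^ e choose p ^ e) + 1] (mod p)"
    using binomial_add_prime_power_cong[OF assms, of "j * p ^ e" e "p ^ e"] by simp
  also have "[(j * p ^ e choose p ^ e) + 1 = Suc j] (mod p)"
    using cong_add[OF Suc.IH cong_refl[of 1]] by simp
  finally show ?case
    by (simp add: add.commute)
qed

lemma binomial_add_mult_prime_power_cong:
  assumes "prime p" "k < p ^ e"
  shows "[(x + j * p ^ e) choose k = x choose k] (mod p)"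
proof (induction j)
  case (Suc j)
  have "[(x + j * p ^ e + p ^ e) choose k = (x + j * p ^ e) choose k] (mod p)"
    using binomial_add_prime_power_cong[OF assms(1), of "x + j * p ^ e" e k] assms(2)
    by simp
  also note Suc.IH
  finally show ?case
    by (simp add: add_ac)
qed simp

lemma fact_mult_eq_prod_binomial:
  assumes "0 < q"
  shows "fact (j * q) = fact j * fact q ^ j * (\<Prod>i<j. (i * q + (q - 1)) choose (q - 1) :: nat)"
proof (induction j)
  case (Suc j)
  have "j * q + q - 1 = j * q + (q - 1)"
    using assms by simp
  then have "q * ((j * q + q) choose q) = q * (Suc j * ((j * q + (q - 1)) choose (q - 1)))"
    using times_binomial_minus1_eq[OF assms, of "j * q + q"] by (simp add: algebra_simps)
  then have step: "(j * q + q) choose q = Suc j * ((j * q + (q - 1)) choose (q - 1))"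
    using assms by simp
  have "fact (Suc j * q) = fact (j * q) * fact q * ((j * q + q) choose q)"
    using binomial_fact_lemma[of q "j * q + q"] by (simp add: add.commute mult_ac)
  also have "\<dots> =
      fact (Suc j) * fact q ^ Suc j * (\<Prod>i<Suc j. (i * q + (q - 1)) choose (q - 1))"
    by (simp add: Suc.IH step) (simp add: algebra_simps)
  finally show ?case .
qed simp

lemma dp_coefficient_prime_power_cong:
  assumes p: "prime p"
  shows "[fact (p * p ^ e) div (fact p * fact (p ^ e) ^ p) = 1] (mod p)"
proof -
  have "fact (p * p ^ e) = fact p * fact (p ^ e) ^ p *
      (\<Prod>i<p. (i * p ^ e + (p ^ e - 1)) choose (p ^ e - 1) :: nat)"
    using fact_mult_eq_prod_binomial p by (simp add: prime_gt_0_nat)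
  then have "fact (p * p ^ e) div (fact p * fact (p ^ e) ^ p)
      = (\<Prod>i<p. (i * p ^ e + (p ^ e - 1)) choose (p ^ e - 1) :: nat)"
    by simp
  also have "[\<dots> = (\<Prod>i<p. (p ^ e - 1) choose (p ^ e - 1))] (mod p)"
  proof (rule cong_prod)
    fix i
    have "p ^ e - 1 < p ^ e"
      using p by (simp add: prime_gt_0_nat)
    then show
      "[(i * p ^ e + (p ^ e - 1)) choose (p ^ e - 1) = (p ^ e - 1) choose (p ^ e - 1)] (mod p)"
      using binomial_add_mult_prime_power_cong[OF p, of "p ^ e - 1" e "p ^ e - 1" i]
      by (simp add: add.commute)
  qed
  finally show ?thesis
    by simp
qed

lemma prime_not_dvd_binomial_prime_part:
  assumes "prime p" "n \<noteq> 0"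
  shows "\<not> p dvd (n choose p ^ multiplicity p n)"
proof -
  obtain m where n: "n = p ^ multiplicity p n * m" and "\<not> p dvd m"
    using multiplicity_decompose'[OF assms(2)] assms(1) not_prime_unit by blast
  moreover have "[n choose p ^ multiplicity p n = m] (mod p)"
    using binomial_mult_prime_power_cong[OF assms(1), of m "multiplicity p n"] n
    by (simp add: mult.commute)
  ultimately show ?thesis
    using cong_dvd_iff by blast
qed

lemma ab_group_obj_DP_imp_Alg: "ab_group_obj_DP A m e i \<Longrightarrow> ab_group_obj_Alg A m e i"
  unfolding ab_group_obj_def dp_hom_def by blast

locale nonunital_algebra =
  fixes A :: "('r::comm_ring_1, 'a) dp_ops"
  assumes algebra: "is_algebra A"
begin

sublocale add: abel_semigroup "add A"
proof
  show "add A (add A a b) c = add A a (add A b c)" for a b c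
    using algebra unfolding is_algebra_def by meson
  show "add A a b = add A b a" for a b
    using algebra unfolding is_algebra_def by meson
qed

sublocale add: group "add A" "zer A" "neg A"
proof
  show "add A (zer A) a = a" for a
    using algebra unfolding is_algebra_def by meson
  show "add A (neg A a) a = zer A" for a
    using algebra add.commute unfolding is_algebra_def by metis
qed

sublocale mul: abel_semigroup "mul A"
proof
  show "mul A (mul A a b) c = mul A a (mul A b c)" for a b c
    using algebra unfolding is_algebra_def by meson
  show "mul A a b = mul A b a" for a b
    using algebra unfolding is_algebra_def by meson
qed

lemma mul_add_right: "mul A a (add A b c) = add A (mul A a b) (mul A a c)"
  using algebra unfolding is_algebra_def by meson

lemma smul_add_right: "smul A r (add A a b) = add A (smul A r a) (smul A r b)"
  using algebra unfolding is_algebra_def by meson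

lemma add_eq_self_iff: "add A a b = a \<longleftrightarrow> b = zer A"
  using add.left_cancel[of a b "zer A"] by simp

lemma mul_zero_right: "mul A a (zer A) = zer A"
  using mul_add_right[of a "zer A" "zer A"] add_eq_self_iff by (metis add.right_neutral)

lemma mul_zero_left: "mul A (zer A) a = zer A"
  using mul_zero_right mul.commute by metis

lemma smul_zero: "smul A r (zer A) = zer A"
  using smul_add_right[of r "zer A" "zer A"] add_eq_self_iff by (metis add.right_neutral)

lemma smul_neg: "smul A r (neg A a) = neg A (smul A r a)"
  using smul_add_right[of r a "neg A a"] smul_zero add.inverse_unique by simp

lemma neg_add: "neg A (add A a b) = add A (neg A a) (neg A b)"
  using add.inverse_distrib_swap add.commute by metis

lemma nsmul_0 [simp]: "nsmul A 0 a = zer A"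
  by (simp add: nsmul_def)

lemma nsmul_Suc [simp]: "nsmul A (Suc k) a = add A a (nsmul A k a)"
  by (simp add: nsmul_def)

lemma nsmul_1: "nsmul A 1 a = a"
  by simp

lemma nsmul_add: "nsmul A (j + k) a = add A (nsmul A j a) (nsmul A k a)"
  by (induction j) (simp_all add: add.assoc)

lemma nsmul_zero: "nsmul A k (zer A) = zer A"
  by (induction k) simp_all

lemma nsmul_mult: "nsmul A (j * k) a = nsmul A j (nsmul A k a)"
  by (induction j) (simp_all add: nsmul_add)

lemma nsmul_mod:
  assumes "nsmul A d a = zer A"
  shows "nsmul A k a = nsmul A (k mod d) a"
proof -
  have "nsmul A k a = add A (nsmul A (k div d * d) a) (nsmul A (k mod d) a)"
    by (simp flip: nsmul_add)
  then show ?thesis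
    by (simp add: nsmul_mult assms nsmul_zero)
qed

lemma nsmul_cong:
  assumes "nsmul A d a = zer A" "[j = k] (mod d)"
  shows "nsmul A j a = nsmul A k a"
  using nsmul_mod[OF assms(1)] assms(2) unfolding cong_def by metis

definition add_order :: "'a \<Rightarrow> nat" where
  "add_order a = (LEAST d. 0 < d \<and> nsmul A d a = zer A)"

lemma nsmul_eq_zero_iff_add_order_dvd:
  assumes "0 < n" "nsmul A n a = zer A"
  shows "nsmul A k a = zer A \<longleftrightarrow> add_order a dvd k"
proof -
  let ?P = "\<lambda>d. 0 < d \<and> nsmul A d a = zer A"
  have "?P (add_order a)"
    unfolding add_order_def by (rule LeastI[of ?P n]) (use assms in blast)
  then have order_pos: "0 < add_order a" and order_kills: "nsmul A (add_order a) a = zer A"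
    by blast+
  have order_least: "add_order a \<le> d" if "?P d" for d
    unfolding add_order_def using that by (rule Least_le)
  show ?thesis
  proof
    assume "nsmul A k a = zer A"
    then have "nsmul A (k mod add_order a) a = zer A"
      using nsmul_mod[OF order_kills, of k] by simp
    moreover have "k mod add_order a < add_order a"
      using order_pos by simp
    ultimately have "k mod add_order a = 0"
      using order_least by (meson not_gr0 not_le)
    then show "add_order a dvd k"
      by (simp add: dvd_eq_mod_eq_0)
  next
    assume "add_order a dvd k"
    then obtain t where "k = t * add_order a"
      by (metis dvdE mult.commute)
    then show "nsmul A k a = zer A"
      by (simp add: nsmul_mult order_kills nsmul_zero)
  qed
qed

lemma ab_group_obj_Alg_unit:
  assumes "ab_group_obj_Alg A m e i"
  shows "e () = zer A"
proof -
  have "alg_hom (term_alg :: ('r, unit) dp_ops) A e"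
    using assms unfolding ab_group_obj_def by blast
  then have "e () = add A (e ()) (e ())"
    unfolding alg_hom_def term_alg_def by (metis dp_ops.select_convs(1))
  then show ?thesis
    using add_eq_self_iff by metis
qed

lemma ab_group_obj_Alg_mult_eq_add:
  assumes G: "ab_group_obj_Alg A m e i"
  shows "m (a, b) = add A a b"
proof -
  have unit: "m (zer A, x) = x" "m (x, zer A) = x" for x
    using G ab_group_obj_Alg_unit[OF G] unfolding ab_group_obj_def by auto
  have "alg_hom (prod_alg A A) A m"
    using G unfolding ab_group_obj_def by blast
  then have "m (add (prod_alg A A) (a, zer A) (zer A, b)) = add A (m (a, zer A)) (m (zer A, b))"
    unfolding alg_hom_def by blast
  then show ?thesis
    by (simp add: prod_alg_def unit)
qed

lemma ab_group_obj_Alg_mul_eq_zero: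
  assumes G: "ab_group_obj_Alg A m e i"
  shows "mul A a b = zer A"
proof -
  have "alg_hom (prod_alg A A) A m"
    using G unfolding ab_group_obj_def by blast
  then have "m (mul (prod_alg A A) (a, zer A) (zer A, b)) = mul A (m (a, zer A)) (m (zer A, b))"
    unfolding alg_hom_def by blast
  then show ?thesis
    by (simp add: prod_alg_def ab_group_obj_Alg_mult_eq_add[OF G] mul_zero_left mul_zero_right)
qed

end

locale dp_algebra =
  fixes A :: "('r::comm_ring_1, 'a) dp_ops"
  assumes dp_algebra: "is_dp_algebra A"
begin

sublocale nonunital_algebra
  using dp_algebra unfolding is_dp_algebra_def by unfold_locales blast

lemma gam_1: "gam A 1 a = a"
  using dp_algebra unfolding is_dp_algebra_def by blast

lemma gam_add_lsum:
  "1 \<le> n \<Longrightarrow> gam A n (add A a b) =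
     add A (gam A n a)
       (add A (lsum A (map (\<lambda>i. mul A (gam A i a) (gam A (n - i) b)) [1..<n])) (gam A n b))"
  using dp_algebra unfolding is_dp_algebra_def by blast

lemma gam_smul: "1 \<le> n \<Longrightarrow> gam A n (smul A r a) = smul A (r ^ n) (gam A n a)"
  using dp_algebra unfolding is_dp_algebra_def by blast

lemma mul_gam_gam:
  "1 \<le> m \<Longrightarrow> 1 \<le> n \<Longrightarrow>
     mul A (gam A m a) (gam A n a) = nsmul A (fact (m + n) div (fact m * fact n)) (gam A (m + n) a)"
  using dp_algebra unfolding is_dp_algebra_def by blast

lemma gam_gam:
  "1 \<le> m \<Longrightarrow> 1 \<le> n \<Longrightarrow>
     gam A m (gam A n a) = nsmul A (fact (m * n) div (fact m * fact n ^ m)) (gam A (m * n) a)"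
  using dp_algebra unfolding is_dp_algebra_def by blast

end

locale square_zero_dp_algebra = dp_algebra +
  assumes mul_eq_zero: "mul A a b = zer A"
begin

lemma gam_add:
  assumes "1 \<le> n"
  shows "gam A n (add A a b) = add A (gam A n a) (gam A n b)"
proof -
  have "lsum A (map (\<lambda>_. zer A) xs) = zer A" for xs :: "nat list"
    by (induction xs) (simp_all add: lsum_def)
  then show ?thesis
    using assms by (simp add: gam_add_lsum mul_eq_zero)
qed

lemma gam_zero: "1 \<le> n \<Longrightarrow> gam A n (zer A) = zer A"
  using gam_add[of n "zer A" "zer A"] add_eq_self_iff by (metis add.right_neutral)

lemma gam_neg: "1 \<le> n \<Longrightarrow> gam A n (neg A a) = neg A (gam A n a)"
  using gam_add[of n a "neg A a"] gam_zero add.inverse_unique by simp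

lemma binomial_nsmul_gam:
  assumes "0 < i" "i < n"
  shows "nsmul A (n choose i) (gam A n a) = zer A"
  using mul_gam_gam[of i "n - i" a] assms by (simp add: binomial_fact' mul_eq_zero)

lemma nsmul_gam_self: "2 \<le> n \<Longrightarrow> nsmul A n (gam A n a) = zer A"
  using binomial_nsmul_gam[of 1 n a] by simp

lemma gam_eq_zero_if_not_prime_power:
  assumes n: "2 \<le> n" and not_prime_power: "\<nexists>p k. prime p \<and> n = p ^ k"
  shows "gam A n a = zer A"
proof -
  let ?g = "gam A n a"
  have kills: "nsmul A k ?g = zer A \<longleftrightarrow> add_order ?g dvd k" for k
    using nsmul_eq_zero_iff_add_order_dvd[of n] nsmul_gam_self[OF n] n by simp
  have "add_order ?g = 1"
  proof (rule ccontr)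
    assume "add_order ?g \<noteq> 1"
    then obtain p where p: "prime p" "p dvd add_order ?g"
      using prime_factor_nat by blast
    let ?q = "p ^ multiplicity p n"
    have "?q \<noteq> n"
      using not_prime_power p(1) by metis
    moreover have "?q dvd n"
      by (rule multiplicity_dvd)
    ultimately have "0 < ?q" "?q < n"
      using n p(1) by (auto simp: prime_gt_0_nat dest: dvd_imp_le)
    then have "p dvd (n choose ?q)"
      using binomial_nsmul_gam kills p(2) dvd_trans by blast
    with p(1) n show False
      using prime_not_dvd_binomial_prime_part by simp
  qed
  then show ?thesis
    using kills[of 1] by simp
qed

lemma prime_nsmul_gam_prime_power:
  assumes p: "prime p" and "0 < e"
  shows "nsmul A p (gam A (p ^ e) a) = zer A"
proof -
  obtain e' where e: "e = Suc e'"
    using \<open>0 < e\<close> gr0_implies_Suc by blast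
  define g where "g = gam A (p ^ e) a"
  define c :: nat where "c = fact (p * p ^ e') div (fact p * fact (p ^ e') ^ p)"
  have p2: "2 \<le> p"
    using prime_ge_2_nat[OF p] .
  have pe2: "2 \<le> p ^ e"
    using p2 self_le_power[of p e] \<open>0 < e\<close> by simp
  have kills: "nsmul A k g = zer A \<longleftrightarrow> add_order g dvd k" for k
    using nsmul_eq_zero_iff_add_order_dvd[OF _ nsmul_gam_self[OF pe2]] p
    unfolding g_def by (simp add: prime_gt_0_nat)
  have "gam A p (gam A (p ^ e') a) = nsmul A c g"
    using gam_gam[of p "p ^ e'" a] p e
    by (simp add: g_def c_def prime_ge_1_nat Suc_leI prime_gt_0_nat)
  then have "nsmul A (p * c) g = zer A"
    using nsmul_gam_self[OF p2, of "gam A (p ^ e') a"] by (simp add: nsmul_mult)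
  moreover have "coprime c p"
    using cong_imp_coprime[OF cong_sym[OF dp_coefficient_prime_power_cong[OF p, of e']]]
    by (simp add: c_def)
  then have "gcd (p ^ e) (p * c) = p"
    by (simp add: e gcd_mult_distrib_nat[symmetric] coprime_commute)
  ultimately have "add_order g dvd p"
    using kills nsmul_gam_self[OF pe2] unfolding g_def by (metis gcd_greatest)
  then show ?thesis
    using kills[of p] unfolding g_def by blast
qed

lemma gam_prime_power_Suc:
  assumes p: "prime p"
  shows "gam A (p ^ Suc e) a = gam A p (gam A (p ^ e) a)"
proof -
  let ?c = "fact (p * p ^ e) div (fact p * fact (p ^ e) ^ p)"
  have "gam A p (gam A (p ^ e) a) = nsmul A ?c (gam A (p ^ Suc e) a)"
    using gam_gam[of p "p ^ e" a] p by (simp add: prime_ge_1_nat Suc_leI prime_gt_0_nat)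
  also have "\<dots> = nsmul A 1 (gam A (p ^ Suc e) a)"
    by (rule nsmul_cong[OF prime_nsmul_gam_prime_power[OF p zero_less_Suc]
          dp_coefficient_prime_power_cong[OF p]])
  also have "\<dots> = gam A (p ^ Suc e) a"
    by (rule nsmul_1)
  finally show ?thesis
    by (rule sym)
qed

lemma gam_prime_power:
  assumes p: "prime p"
  shows "gam A (p ^ e) = gam A p ^^ e"
proof (induction e)
  case 0
  show ?case
    by (rule ext) (simp only: power_0 funpow_0 gam_1)
next
  case (Suc e)
  show ?case
  proof
    fix a
    have "gam A (p ^ Suc e) a = gam A p (gam A (p ^ e) a)"
      by (rule gam_prime_power_Suc[OF p])
    then show "gam A (p ^ Suc e) a = (gam A p ^^ Suc e) a"
      by (simp only: Suc.IH funpow.simps comp_apply)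
  qed
qed

lemma ab_group_obj_DP_add:
  "ab_group_obj_DP A (\<lambda>(a, b). add A a b) (\<lambda>_. zer A) (neg A)"
proof -
  have "dp_hom (prod_alg A A) A (\<lambda>(a, b). add A a b)"
    unfolding dp_hom_def alg_hom_def prod_alg_def
    by (simp add: split_paired_all add.assoc add.left_commute mul_eq_zero smul_add_right gam_add)
  moreover have "dp_hom term_alg A (\<lambda>_. zer A)"
    unfolding dp_hom_def alg_hom_def term_alg_def
    by (simp add: mul_eq_zero smul_zero gam_zero)
  moreover have "dp_hom A A (neg A)"
    unfolding dp_hom_def alg_hom_def
    by (simp add: mul_eq_zero neg_add smul_neg gam_neg)
  ultimately show ?thesis
    unfolding ab_group_obj_def by (simp add: add.assoc add.commute add.left_commute)
qed

end

theorem mainTheorem1: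
  fixes A :: "('r::comm_ring_1, 'a) dp_ops"
  assumes "is_dp_algebra A"
  shows "((\<exists>m e i. ab_group_obj_DP A m e i) \<longleftrightarrow> (\<forall>a b. mul A a b = zer A))
    \<and> ((\<forall>a b. mul A a b = zer A) \<longleftrightarrow> (\<exists>m e i. ab_group_obj_Alg A m e i))
    \<and> (\<forall>m e i. ab_group_obj_DP A m e i \<longrightarrow> (\<forall>a b. m (a, b) = add A a b))
    \<and> ((\<forall>a b. mul A a b = zer A) \<longrightarrow>
        (\<forall>n::nat. n \<ge> 2 \<and> \<not> (\<exists>p k. prime p \<and> n = p ^ k) \<longrightarrow> (\<forall>a. gam A n a = zer A))
      \<and> (\<forall>p::nat. prime p \<longrightarrow>
           (\<forall>a b. gam A p (add A a b) = add A (gam A p a) (gam A p b))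
         \<and> (\<forall>a. nsmul A p (gam A p a) = zer A)
         \<and> (\<forall>r a. gam A p (smul A r a) = smul A (r ^ p) (gam A p a)))
      \<and> (\<forall>(p::nat) (e::nat). prime p \<and> e \<ge> 1 \<longrightarrow>
           gam A (p ^ e) = (gam A p ^^ e)
         \<and> (\<forall>a. nsmul A p (gam A (p ^ e) a) = zer A)))"
proof -
  interpret dp_algebra A
    by (fact dp_algebra.intro[OF assms])
  have group_obj_mult: "m (a, b) = add A a b" if "ab_group_obj_DP A m e i" for m e i a b
    using ab_group_obj_Alg_mult_eq_add[OF ab_group_obj_DP_imp_Alg[OF that]] .
  show ?thesis
  proof (cases "\<forall>a b. mul A a b = zer A")
    case False
    then show ?thesis
      using ab_group_obj_Alg_mul_eq_zero ab_group_obj_DP_imp_Alg group_obj_mult by blast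
  next
    case True
    then interpret square_zero_dp_algebra A
      by unfold_locales blast
    have prime_power: "gam A (p ^ e) = gam A p ^^ e \<and> nsmul A p (gam A (p ^ e) a) = zer A"
      if "prime p" "1 \<le> e" for p e a
      using that gam_prime_power prime_nsmul_gam_prime_power by simp
    have "\<exists>m e i. ab_group_obj_DP A m e i"
      using ab_group_obj_DP_add by blast
    moreover from this have "\<exists>m e i. ab_group_obj_Alg A m e i"
      using ab_group_obj_DP_imp_Alg by blast
    ultimately show ?thesis
      using True group_obj_mult prime_power gam_eq_zero_if_not_prime_power
        gam_add[OF prime_ge_1_nat] gam_smul[OF prime_ge_1_nat] nsmul_gam_self[OF prime_ge_2_nat]
      by (intro conjI impI allI; (elim conjE)?) blast+
  qed
qed

end
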